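(* Let $G$ be a finite simple graph and let $\{G_1,\dots,G_b\}$ be an edge decomposition of $G$ (i.e. $G_1,\dots,G_b$ are subgraphs of $G$ whose edge sets partition $E(G)$). Suppose that for each $i=1,\dots,b$, the simple graph $G_i$ has a triangle decomposition, and that $\Delta_0(G_i)\neq\emptyset$. Then $\Delta_0(G)\neq\emptyset$; that is, some multigraph in $\Gamma_0(G)$ has a triangle decomposition.
   Context: For a finite simple graph $G$ and a nonnegative integer $a$, $\Gamma_a(G)$ denotes the set of all multigraphs on the vertex set of $G$ obtained by assigning to the edges of $G$ the multiplicities $a,a+1,\dots,a+|E(G)|-1$, bijectively (each multiplicity used on exactly one edge; an edge with multiplicity $0$ is absent). A triangle decomposition of a (multi)graph is a partition of its edge multiset into triangles (copies of $K_3$). $\Delta_a(G)$ denotes the set of multigraphs in $\Gamma_a(G)$ that admit a triangle decomposition. *)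

theory Defs
  imports Main "HOL-Library.Multiset"
begin

definition simple_graph :: "'a set \<Rightarrow> 'a set set \<Rightarrow> bool" where
  "simple_graph V E \<longleftrightarrow> finite V \<and> (\<forall>e\<in>E. e \<subseteq> V \<and> card e = 2)"

definition subgraph :: "'a set \<Rightarrow> 'a set set \<Rightarrow> 'a set \<Rightarrow> 'a set set \<Rightarrow> bool" where
  "subgraph V' E' V E \<longleftrightarrow> simple_graph V' E' \<and> V' \<subseteq> V \<and> E' \<subseteq> E"

text \<open>A multigraph on V is given by an edge multiplicity function on 2-subsets
(multiplicity 0 = absent edge).\<close>
definition Gamma :: "nat \<Rightarrow> 'a set \<Rightarrow> 'a set set \<Rightarrow> ('a set \<Rightarrow> nat) set" where
  "Gamma a V E = {m. \<exists>f. bij_betw f E {a..<a + card E} \<and>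
                        (\<forall>e. m e = (if e \<in> E then f e else 0))}"

definition triangle_decomposable :: "('a set \<Rightarrow> nat) \<Rightarrow> bool" where
  "triangle_decomposable m \<longleftrightarrow>
     (\<exists>T :: 'a set multiset. (\<forall>t\<in>#T. card t = 3) \<and>
        (\<forall>e. card e = 2 \<longrightarrow> m e = size (filter_mset (\<lambda>t. e \<subseteq> t) T)))"

definition Delta :: "nat \<Rightarrow> 'a set \<Rightarrow> 'a set set \<Rightarrow> ('a set \<Rightarrow> nat) set" where
  "Delta a V E = {m \<in> Gamma a V E. triangle_decomposable m}"

definition graph_triangle_decomposable :: "'a set set \<Rightarrow> bool" where
  "graph_triangle_decomposable E \<longleftrightarrow> triangle_decomposable (\<lambda>e. if e \<in> E then 1 else 0)"

end

theory Submission
  imports Defs "HOL-Library.Disjoint_Sets"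
begin

text \<open>Relabel the edges of the pieces one after another: if \<open>m\<^sub>1 \<in> \<Delta>\<^sub>a(G\<^sub>1)\<close> and
  \<open>m\<^sub>2 \<in> \<Delta>\<^sub>a(G\<^sub>2)\<close> for edge-disjoint \<open>G\<^sub>1, G\<^sub>2\<close>, then raising every multiplicity of \<open>m\<^sub>2\<close>
  by \<open>|E(G\<^sub>1)|\<close> makes the two label ranges consecutive, so \<open>m\<^sub>1 + m\<^sub>2 + |E(G\<^sub>1)| \<cdot> G\<^sub>2\<close>
  lies in \<open>\<Gamma>\<^sub>a(G\<^sub>1 \<union> G\<^sub>2)\<close>.  It is triangle decomposable as soon as \<open>G\<^sub>2\<close> itself is, since
  triangle decompositions add up.\<close>

lemma triangle_decomposable_zero: "triangle_decomposable (\<lambda>e. 0)"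
  unfolding triangle_decomposable_def by (rule exI[of _ "{#}"]) auto

lemma triangle_decomposable_add:
  assumes "triangle_decomposable m\<^sub>1" and "triangle_decomposable m\<^sub>2"
  shows "triangle_decomposable (\<lambda>e. m\<^sub>1 e + m\<^sub>2 e)"
proof -
  obtain T\<^sub>1 :: "'a set multiset" where T\<^sub>1: "\<forall>t\<in>#T\<^sub>1. card t = 3"
    "\<forall>e. card e = 2 \<longrightarrow> m\<^sub>1 e = size (filter_mset (\<lambda>t. e \<subseteq> t) T\<^sub>1)"
    using assms(1) unfolding triangle_decomposable_def by blast
  obtain T\<^sub>2 :: "'a set multiset" where T\<^sub>2: "\<forall>t\<in>#T\<^sub>2. card t = 3"
    "\<forall>e. card e = 2 \<longrightarrow> m\<^sub>2 e = size (filter_mset (\<lambda>t. e \<subseteq> t) T\<^sub>2)"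
    using assms(2) unfolding triangle_decomposable_def by blast
  show ?thesis unfolding triangle_decomposable_def
    by (rule exI[of _ "T\<^sub>1 + T\<^sub>2"]) (use T\<^sub>1 T\<^sub>2 in auto)
qed

lemma triangle_decomposable_mult:
  assumes "triangle_decomposable m"
  shows "triangle_decomposable (\<lambda>e. k * m e)"
proof (induction k)
  case 0
  then show ?case using triangle_decomposable_zero by simp
next
  case (Suc k)
  then show ?case using triangle_decomposable_add[OF assms Suc] by simp
qed

lemma simple_graph_finite_edges:
  assumes "simple_graph V E"
  shows "finite E"
proof (rule finite_subset)
  show "E \<subseteq> Pow V" and "finite (Pow V)"
    using assms unfolding simple_graph_def by auto
qed

lemma Gamma_empty: "(\<lambda>e. 0) \<in> Gamma a V {}"
  unfolding Gamma_def by (auto simp: bij_betw_def)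

lemma Gamma_Un:
  assumes "finite E\<^sub>1" and "finite E\<^sub>2" and disjoint: "E\<^sub>1 \<inter> E\<^sub>2 = {}"
    and "m\<^sub>1 \<in> Gamma a V\<^sub>1 E\<^sub>1" and "m\<^sub>2 \<in> Gamma a V\<^sub>2 E\<^sub>2"
  shows "(\<lambda>e. m\<^sub>1 e + m\<^sub>2 e + card E\<^sub>1 * (if e \<in> E\<^sub>2 then 1 else 0)) \<in> Gamma a V (E\<^sub>1 \<union> E\<^sub>2)"
proof -
  define n\<^sub>1 n\<^sub>2 where "n\<^sub>1 = card E\<^sub>1" and "n\<^sub>2 = card E\<^sub>2"
  obtain f\<^sub>1 where f\<^sub>1: "bij_betw f\<^sub>1 E\<^sub>1 {a..<a + n\<^sub>1}" "\<forall>e. m\<^sub>1 e = (if e \<in> E\<^sub>1 then f\<^sub>1 e else 0)"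
    using assms(4) unfolding Gamma_def n\<^sub>1_def by auto
  obtain f\<^sub>2 where f\<^sub>2: "bij_betw f\<^sub>2 E\<^sub>2 {a..<a + n\<^sub>2}" "\<forall>e. m\<^sub>2 e = (if e \<in> E\<^sub>2 then f\<^sub>2 e else 0)"
    using assms(5) unfolding Gamma_def n\<^sub>2_def by auto
  define g where "g e = (if e \<in> E\<^sub>1 then f\<^sub>1 e else f\<^sub>2 e + n\<^sub>1)" for e
  have "bij_betw g E\<^sub>1 {a..<a + n\<^sub>1}"
    using f\<^sub>1(1) by (rule bij_betw_cong[THEN iffD1, rotated]) (auto simp: g_def)
  moreover have "bij_betw g E\<^sub>2 {a + n\<^sub>1..<a + n\<^sub>1 + n\<^sub>2}"
  proof -
    have "bij_betw (\<lambda>x. x + n\<^sub>1) {a..<a + n\<^sub>2} {a + n\<^sub>1..<a + n\<^sub>1 + n\<^sub>2}"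
      by (simp add: bij_betw_def add.commute add.left_commute)
    from bij_betw_trans[OF f\<^sub>2(1) this] show ?thesis
      by (rule bij_betw_cong[THEN iffD1, rotated]) (use disjoint in \<open>auto simp: g_def\<close>)
  qed
  ultimately have "bij_betw g (E\<^sub>1 \<union> E\<^sub>2) ({a..<a + n\<^sub>1} \<union> {a + n\<^sub>1..<a + n\<^sub>1 + n\<^sub>2})"
    by (rule bij_betw_combine) auto
  moreover have "{a..<a + n\<^sub>1} \<union> {a + n\<^sub>1..<a + n\<^sub>1 + n\<^sub>2} = {a..<a + card (E\<^sub>1 \<union> E\<^sub>2)}"
    using card_Un_disjoint[OF assms(1-3)] unfolding n\<^sub>1_def n\<^sub>2_def by auto
  moreover have "m\<^sub>1 e + m\<^sub>2 e + n\<^sub>1 * (if e \<in> E\<^sub>2 then 1 else 0) = (if e \<in> E\<^sub>1 \<union> E\<^sub>2 then g e else 0)"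
    for e
    using f\<^sub>1(2) f\<^sub>2(2) disjoint by (auto simp: g_def)
  ultimately show ?thesis unfolding Gamma_def n\<^sub>1_def by auto
qed

lemma Delta_Un:
  assumes "finite E\<^sub>1" and "finite E\<^sub>2" and "E\<^sub>1 \<inter> E\<^sub>2 = {}"
    and "m\<^sub>1 \<in> Delta a V\<^sub>1 E\<^sub>1" and "m\<^sub>2 \<in> Delta a V\<^sub>2 E\<^sub>2"
    and "graph_triangle_decomposable E\<^sub>2"
  shows "(\<lambda>e. m\<^sub>1 e + m\<^sub>2 e + card E\<^sub>1 * (if e \<in> E\<^sub>2 then 1 else 0)) \<in> Delta a V (E\<^sub>1 \<union> E\<^sub>2)"
  using assms Gamma_Un[OF assms(1-3)]
  unfolding Delta_def graph_triangle_decomposable_def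
  by (auto intro!: triangle_decomposable_add triangle_decomposable_mult)

lemma Delta_UNION_nonempty:
  assumes "finite I" and "disjoint_family_on EE I"
    and "\<forall>i\<in>I. finite (EE i)"
    and "\<forall>i\<in>I. graph_triangle_decomposable (EE i)"
    and "\<forall>i\<in>I. Delta a (VV i) (EE i) \<noteq> {}"
  shows "Delta a V (\<Union>i\<in>I. EE i) \<noteq> {}"
  using assms
proof (induction I rule: finite_induct)
  case empty
  show ?case
    using Gamma_empty triangle_decomposable_zero unfolding Delta_def by auto
next
  case (insert j I)
  then obtain m\<^sub>1 where "m\<^sub>1 \<in> Delta a V (\<Union>i\<in>I. EE i)"
    by (auto simp: disjoint_family_on_def)
  moreover obtain m\<^sub>2 where "m\<^sub>2 \<in> Delta a (VV j) (EE j)"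
    using insert.prems(4) by blast
  moreover have "(\<Union>i\<in>I. EE i) \<inter> EE j = {}"
    using insert.hyps(2) insert.prems(1) by (fastforce simp: disjoint_family_on_def)
  ultimately have "(\<lambda>e. m\<^sub>1 e + m\<^sub>2 e + card (\<Union>i\<in>I. EE i) * (if e \<in> EE j then 1 else 0))
      \<in> Delta a V ((\<Union>i\<in>I. EE i) \<union> EE j)"
    using insert.hyps(1) insert.prems(2,3) by (intro Delta_Un) auto
  then show ?case
    by (auto simp: Un_commute)
qed

theorem mainTheorem3:
  fixes V :: "'a set" and E :: "'a set set"
    and VV :: "nat \<Rightarrow> 'a set" and EE :: "nat \<Rightarrow> 'a set set" and b :: nat
  assumes "simple_graph V E"
    and "\<forall>i\<in>{1..b}. subgraph (VV i) (EE i) V E"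
    and "\<forall>i\<in>{1..b}. \<forall>j\<in>{1..b}. i \<noteq> j \<longrightarrow> EE i \<inter> EE j = {}"
    and "(\<Union>i\<in>{1..b}. EE i) = E"
    and "\<forall>i\<in>{1..b}. graph_triangle_decomposable (EE i)"
    and "\<forall>i\<in>{1..b}. Delta 0 (VV i) (EE i) \<noteq> {}"
  shows "Delta 0 V E \<noteq> {}"
proof -
  have "finite E"
    using assms(1) by (rule simple_graph_finite_edges)
  then have "\<forall>i\<in>{1..b}. finite (EE i)"
    using assms(4) by (metis UN_upper finite_subset)
  moreover have "disjoint_family_on EE {1..b}"
    using assms(3) unfolding disjoint_family_on_def by blast
  ultimately show ?thesis
    unfolding assms(4)[symmetric] using assms(5,6) by (intro Delta_UNION_nonempty) auto
qed

end
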